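(* If a system $C=(1,c_2,c_3,c_4,c_5,2c_5-c_3)$ is canonical and its subsystem $(1,c_2,c_3,c_4,c_5)$ is noncanonical, then $C$ is $(1,c_2,2c_2-1,c_4,c_2+c_4-1,2c_4-1)$ or $(1,c_2,2c_2,c_4,c_2+c_4,2c_4)$.
   Context: A system is a tuple $C=(c_1,\dots,c_n)$ of integers with $1=c_1<c_2<\dots<c_n$; for $k\le n$, $(c_1,\dots,c_k)$ is a subsystem. For a positive integer $v$, $\mathrm{opt}_C(v)$ is the minimum of $\sum_i x_i$ over $x\in\mathbb{Z}_{\ge0}^n$ with $\sum_i c_ix_i=v$. The greedy representation of $v$ is produced by: for $i=n$ down to $1$, while $c_i\le$ remaining value, take a coin $c_i$. $\mathrm{grd}_C(v)$ is its number of coins. A positive integer $w$ is a counterexample if $\mathrm{opt}_C(w)<\mathrm{grd}_C(w)$; $C$ is canonical if it has none, noncanonical otherwise. *)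

theory Defs
  imports Main
begin

definition is_system :: "nat list \<Rightarrow> bool" where
  "is_system C \<longleftrightarrow> C \<noteq> [] \<and> hd C = 1 \<and> sorted_wrt (<) C"

definition rep_value :: "nat list \<Rightarrow> nat list \<Rightarrow> nat" where
  "rep_value C x = (\<Sum>i<length C. C ! i * x ! i)"

definition opt :: "nat list \<Rightarrow> nat \<Rightarrow> nat" where
  "opt C v = Min {sum_list x | x. length x = length C \<and> rep_value C x = v}"

text \<open>Greedy coin count, processing coins from largest to smallest: for each coin c,
  take as many copies as fit (v div c), continue with the remainder.  The argument list
  is given largest-coin-first.\<close>
fun grd_desc :: "nat list \<Rightarrow> nat \<Rightarrow> nat" where
  "grd_desc [] v = 0"
| "grd_desc (c # cs) v = (if c = 0 then grd_desc cs v else v div c + grd_desc cs (v mod c))"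

definition grd :: "nat list \<Rightarrow> nat \<Rightarrow> nat" where
  "grd C v = grd_desc (rev C) v"

definition counterexample :: "nat list \<Rightarrow> nat \<Rightarrow> bool" where
  "counterexample C w \<longleftrightarrow> w > 0 \<and> opt C w < grd C w"

definition canonical :: "nat list \<Rightarrow> bool" where
  "canonical C \<longleftrightarrow> (\<forall>w>0. \<not> counterexample C w)"

end

theory Submission
  imports Defs "HOL-Library.Multiset"
begin

text \<open>Let w be the least counterexample of D = (1, a, b, c, d) and M an optimal multiset of
  coins paying w.  Canonicity of C = D @ [e] forces e \<le> w, and minimality of w forces
  d \<notin> M and w < d + u for every coin u of M.  With s = d - b = e - d, the value u + d is
  paid by two coins of C, so greedy on u + d - e = u - s uses at most one coin of D, whence
  u \<in> {s + 1, s + a}.  Comparing coin sums then shows that M consists of exactly two coins,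
  and the only consistent case is M = {c, c} with c = s + a and b \<in> {2a - 1, 2a}.\<close>

lemma zero_not_in_system: "is_system C \<Longrightarrow> 0 \<notin> set C"
  unfolding is_system_def by (cases C) auto

lemma is_system_butlast: "is_system (C @ [e]) \<Longrightarrow> C \<noteq> [] \<Longrightarrow> is_system C"
  unfolding is_system_def by (simp add: sorted_wrt_append)

lemma rep_value_Nil [simp]: "rep_value [] [] = 0"
  by (simp add: rep_value_def)

lemma rep_value_append:
  assumes "length x = length C"
  shows "rep_value (C @ [e]) (x @ [k]) = rep_value C x + e * k"
  using assms by (simp add: rep_value_def lessThan_Suc nth_append)

lemma rep_value_list_update:
  assumes "length x = length C" "i < length C"
  shows "rep_value C (x[i := x ! i + k]) = rep_value C x + C ! i * k"
proof -
  have "rep_value C (x[i := x ! i + k]) = (\<Sum>j<length C. C ! j * x ! j + (if j = i then C ! j * k else 0))"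
    unfolding rep_value_def using assms by (intro sum.cong) (auto simp: nth_list_update algebra_simps)
  also have "\<dots> = rep_value C x + C ! i * k"
    using assms by (simp add: sum.distrib rep_value_def)
  finally show ?thesis .
qed

lemma sum_list_le_rep_value:
  assumes "0 \<notin> set C" "length x = length C"
  shows "sum_list x \<le> rep_value C x"
proof -
  have "sum_list x = (\<Sum>i<length C. x ! i)"
    using assms(2) by (simp add: sum_list_sum_nth atLeast0LessThan)
  also have "\<dots> \<le> (\<Sum>i<length C. C ! i * x ! i)"
  proof (rule sum_mono)
    fix i assume "i \<in> {..<length C}"
    then have "0 < C ! i" using assms(1) by (metis lessThan_iff nth_mem gr0I)
    then show "x ! i \<le> C ! i * x ! i" by simp
  qed
  finally show ?thesis by (simp add: rep_value_def)
qed

lemma grd_append: "0 < e \<Longrightarrow> grd (C @ [e]) v = v div e + grd C (v mod e)"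
  by (simp add: grd_def)

lemma grd_zero [simp]: "grd C 0 = 0"
proof -
  have "grd_desc cs 0 = 0" for cs
    by (induction cs) auto
  then show ?thesis by (simp add: grd_def)
qed

lemma grd_append_greater:
  assumes "\<forall>c\<in>set D. v < c"
  shows "grd (C @ D) v = grd C v"
proof -
  have "grd_desc (cs @ ds) v = grd_desc ds v" if "\<forall>c\<in>set cs. v < c" for cs ds
    using that by (induction cs) auto
  then show ?thesis using assms by (simp add: grd_def)
qed

lemma grd_two_coins: "0 < a \<Longrightarrow> grd [1, a] v = v div a + v mod a"
  by (simp add: grd_def)

lemma greedy_representation:
  assumes "is_system C"
  shows "\<exists>x. length x = length C \<and> rep_value C x = v \<and> sum_list x = grd C v"
  using assms
proof (induction C arbitrary: v rule: rev_induct)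
  case Nil
  then show ?case by (simp add: is_system_def)
next
  case (snoc e C)
  have "0 < e" using zero_not_in_system[OF snoc.prems] by (auto intro: gr0I)
  show ?case
  proof (cases "C = []")
    case True
    then have "e = 1" using snoc.prems by (simp add: is_system_def)
    then show ?thesis
      using True by (intro exI[of _ "[v]"]) (simp add: rep_value_def grd_def)
  next
    case False
    obtain x where x: "length x = length C" "rep_value C x = v mod e" "sum_list x = grd C (v mod e)"
      using snoc.IH is_system_butlast[OF snoc.prems False] by blast
    show ?thesis
      using x \<open>0 < e\<close>
      by (intro exI[of _ "x @ [v div e]"]) (simp add: rep_value_append grd_append)
  qed
qed

lemma finite_rep_sums:
  assumes "0 \<notin> set C"
  shows "finite {sum_list x | x. length x = length C \<and> rep_value C x = v}"
proof (rule finite_subset)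
  show "{sum_list x | x. length x = length C \<and> rep_value C x = v} \<subseteq> {..v}"
    using sum_list_le_rep_value[OF assms] by blast
qed simp

lemma opt_le:
  assumes "0 \<notin> set C" "length x = length C"
  shows "opt C (rep_value C x) \<le> sum_list x"
  unfolding opt_def using assms(2) by (intro Min_le finite_rep_sums[OF assms(1)]) blast

lemma opt_attained:
  assumes "is_system C"
  shows "\<exists>x. length x = length C \<and> rep_value C x = v \<and> sum_list x = opt C v"
proof -
  let ?S = "{sum_list x | x. length x = length C \<and> rep_value C x = v}"
  have "?S \<noteq> {}" using greedy_representation[OF assms] by blast
  then have "opt C v \<in> ?S"
    unfolding opt_def using finite_rep_sums[OF zero_not_in_system[OF assms]] by (rule Min_in[rotated])
  then show ?thesis by auto
qed

lemma opt_le_grd: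
  assumes "is_system C"
  shows "opt C v \<le> grd C v"
proof -
  obtain x where "length x = length C" "rep_value C x = v" "sum_list x = grd C v"
    using greedy_representation[OF assms] by blast
  then show ?thesis using opt_le[OF zero_not_in_system[OF assms]] by metis
qed

lemma opt_add_coin:
  assumes "is_system C" "u \<in> set C"
  shows "opt C (v + u) \<le> opt C v + 1"
proof -
  obtain x where x: "length x = length C" "rep_value C x = v" "sum_list x = opt C v"
    using opt_attained[OF assms(1)] by blast
  obtain i where i: "i < length C" "C ! i = u"
    using assms(2) by (auto simp: in_set_conv_nth)
  have "rep_value C (x[i := x ! i + 1]) = v + u"
    using rep_value_list_update[OF x(1) i(1), of 1] x(2) i(2) by simp
  moreover have "sum_list (x[i := x ! i + 1]) = opt C v + 1"
    using x i by (simp add: sum_list_update)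
  ultimately show ?thesis
    using opt_le[OF zero_not_in_system[OF assms(1)], of "x[i := x ! i + 1]"] x(1) by simp
qed

lemma opt_le_size_mset:
  assumes "is_system C" "set_mset M \<subseteq> set C"
  shows "opt C (\<Sum>\<^sub># M) \<le> size M"
  using assms(2)
proof (induction M)
  case empty
  then show ?case using opt_le_grd[OF assms(1), of 0] by simp
next
  case (add u M)
  then show ?case using opt_add_coin[OF assms(1), of u "\<Sum>\<^sub># M"] by (simp add: add.commute)
qed

lemma rep_value_as_mset:
  assumes "length x = length C"
  shows "\<exists>M. set_mset M \<subseteq> set C \<and> \<Sum>\<^sub># M = rep_value C x \<and> size M = sum_list x"
  using assms
proof (induction C arbitrary: x rule: rev_induct)
  case Nil
  then show ?case by simp
next
  case (snoc e C)
  then have "x \<noteq> []" by auto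
  then obtain x' k where x: "x = x' @ [k]" "length x' = length C"
    using snoc.prems by (cases x rule: rev_cases) auto
  obtain M where "set_mset M \<subseteq> set C" "\<Sum>\<^sub># M = rep_value C x'" "size M = sum_list x'"
    using snoc.IH[OF x(2)] by blast
  then show ?case
    using x by (intro exI[of _ "M + replicate_mset k e"]) (auto simp: rep_value_append)
qed

lemma opt_attained_mset:
  assumes "is_system C"
  shows "\<exists>M. set_mset M \<subseteq> set C \<and> \<Sum>\<^sub># M = v \<and> size M = opt C v"
proof -
  obtain x where "length x = length C" "rep_value C x = v" "sum_list x = opt C v"
    using opt_attained[OF assms] by blast
  then show ?thesis using rep_value_as_mset by metis
qed

lemma opt_append_le:
  assumes "is_system (C @ [e])" "C \<noteq> []"
  shows "opt (C @ [e]) v \<le> opt C v"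
proof -
  obtain M where "set_mset M \<subseteq> set C" "\<Sum>\<^sub># M = v" "size M = opt C v"
    using opt_attained_mset[OF is_system_butlast[OF assms]] by blast
  then show ?thesis using opt_le_size_mset[OF assms(1), of M] by auto
qed

lemma opt_remove_coin_less:
  assumes "is_system C" "set_mset M \<subseteq> set C" "size M = opt C (\<Sum>\<^sub># M)" "u \<in># M"
  shows "opt C (\<Sum>\<^sub># M - u) < opt C (\<Sum>\<^sub># M)"
proof -
  obtain M' where M: "M = add_mset u M'" using multi_member_split[OF assms(4)] by blast
  have "opt C (\<Sum>\<^sub># M') \<le> size M'" using opt_le_size_mset[OF assms(1)] assms(2) M by simp
  then show ?thesis using assms(3) M by simp
qed

lemma grd_append_top:
  assumes "0 < d" "d \<le> v"
  shows "grd (C @ [d]) v = Suc (grd (C @ [d]) (v - d))"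
proof -
  have "v div d = Suc ((v - d) div d)" "v mod d = (v - d) mod d"
    using assms by (simp_all add: le_div_geq le_mod_geq)
  then show ?thesis using assms(1) by (simp add: grd_append)
qed

lemma grd_append_once:
  assumes "e \<le> v" "v < 2 * e"
  shows "grd (C @ [e]) v = Suc (grd C (v - e))"
proof -
  have "v div e = 1" "v mod e = v - e"
    using assms by (simp_all add: div_nat_eqI le_mod_geq)
  then show ?thesis using assms by (simp add: grd_append)
qed

definition least_counterexample :: "nat list \<Rightarrow> nat \<Rightarrow> bool" where
  "least_counterexample C w \<longleftrightarrow> counterexample C w \<and> (\<forall>v<w. \<not> counterexample C v)"

lemma exists_least_counterexample:
  assumes "\<not> canonical C"
  shows "\<exists>w. least_counterexample C w"
proof -
  have "\<exists>w. counterexample C w" using assms unfolding canonical_def by blast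
  then show ?thesis unfolding least_counterexample_def by (simp add: exists_least_iff[symmetric])
qed

text \<open>Otherwise w - d would be a smaller counterexample, because greedy spends exactly one
  more coin on w than on w - d.\<close>
lemma least_counterexample_opt_le_diff_top:
  assumes sys: "is_system (C @ [d])" and least: "least_counterexample (C @ [d]) w" and "d \<le> w"
  shows "opt (C @ [d]) w \<le> opt (C @ [d]) (w - d)"
proof (rule ccontr)
  assume opt_less: "\<not> opt (C @ [d]) w \<le> opt (C @ [d]) (w - d)"
  have "0 < d" using zero_not_in_system[OF sys] by (auto intro: gr0I)
  have "opt (C @ [d]) w < grd (C @ [d]) w"
    using least by (simp add: least_counterexample_def counterexample_def)
  also have "\<dots> = Suc (grd (C @ [d]) (w - d))" using grd_append_top[OF \<open>0 < d\<close> \<open>d \<le> w\<close>] .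
  finally have "opt (C @ [d]) (w - d) < grd (C @ [d]) (w - d)" using opt_less by simp
  moreover from this have "0 < w - d" by (metis grd_zero not_less0 gr0I)
  ultimately have "counterexample (C @ [d]) (w - d)" by (simp add: counterexample_def)
  moreover have "w - d < w" using \<open>0 < d\<close> \<open>0 < w - d\<close> by simp
  ultimately show False using least by (simp add: least_counterexample_def)
qed

lemma least_counterexample_coin_bound:
  assumes sys: "is_system (C @ [d])" and least: "least_counterexample (C @ [d]) w" and "d \<le> w"
    and u: "u \<in> set (C @ [d])" "u \<le> w" and opt_less: "opt (C @ [d]) (w - u) < opt (C @ [d]) w"
  shows "w < d + u"
proof (rule ccontr)
  let ?D = "C @ [d]"
  assume "\<not> w < d + u"
  then have "d \<le> w - u" by simp
  have "0 < u" "0 < d" using zero_not_in_system[OF sys] u(1) by (auto intro: gr0I)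
  have "opt ?D (w - d) \<le> opt ?D (w - u - d) + 1"
    using opt_add_coin[OF sys u(1), of "w - u - d"] \<open>d \<le> w - u\<close> u(2) by (simp add: algebra_simps)
  also have "\<dots> \<le> Suc (grd ?D (w - u - d))" using opt_le_grd[OF sys] by simp
  also have "\<dots> = grd ?D (w - u)" using grd_append_top[OF \<open>0 < d\<close> \<open>d \<le> w - u\<close>] by simp
  also have "\<dots> \<le> opt ?D (w - u)"
  proof -
    have "w - u < w" "0 < w - u" using \<open>0 < u\<close> \<open>0 < d\<close> \<open>d \<le> w - u\<close> by simp_all
    then have "\<not> counterexample ?D (w - u)" using least by (simp add: least_counterexample_def)
    then show ?thesis using \<open>0 < w - u\<close> by (simp add: counterexample_def)
  qed
  also have "\<dots> < opt ?D w" using opt_less .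
  finally show False using least_counterexample_opt_le_diff_top[OF sys least \<open>d \<le> w\<close>] by simp
qed

lemma counterexample_ge_appended_coin:
  assumes sys: "is_system (C @ [e])" "C \<noteq> []" and "canonical (C @ [e])" and "counterexample C w"
  shows "e \<le> w"
proof (rule ccontr)
  assume "\<not> e \<le> w"
  then have "grd (C @ [e]) w = grd C w" using grd_append_greater[of "[e]" w C] by simp
  moreover have "opt (C @ [e]) w \<le> opt C w" using opt_append_le[OF sys] .
  ultimately have "counterexample (C @ [e]) w"
    using \<open>counterexample C w\<close> by (simp add: counterexample_def)
  then show False using \<open>canonical (C @ [e])\<close> unfolding canonical_def counterexample_def by blast
qed

lemma canonical_append_two_coins:
  assumes sys: "is_system (C @ [e])" and "canonical (C @ [e])" and "u \<in> set C" "v \<in> set C"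
    and "e \<le> u + v" "u + v < 2 * e"
  shows "grd C (u + v - e) \<le> 1"
proof -
  have "0 < e" using zero_not_in_system[OF sys] by (auto intro: gr0I)
  have "Suc (grd C (u + v - e)) = grd (C @ [e]) (u + v)"
    using grd_append_once assms(5,6) by simp
  also have "\<dots> \<le> opt (C @ [e]) (u + v)"
    using \<open>canonical (C @ [e])\<close> \<open>0 < e\<close> \<open>e \<le> u + v\<close>
    unfolding canonical_def counterexample_def by (metis not_less order.strict_trans2)
  also have "\<dots> \<le> 2"
    using opt_le_size_mset[OF sys, of "{#u, v#}"] \<open>u \<in> set C\<close> \<open>v \<in> set C\<close> by (simp add: add.commute)
  finally show ?thesis by simp
qed

locale prefix_counterexample =
  fixes a b c d e s w :: nat and M :: "nat multiset"
  assumes system: "is_system [1, a, b, c, d, e]"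
    and canonical: "canonical [1, a, b, c, d, e]"
    and d_eq: "d = b + s" and e_eq: "e = d + s"
    and least: "least_counterexample [1, a, b, c, d] w"
    and coins: "set_mset M \<subseteq> {1, a, b, c, d}"
    and sum_coins: "\<Sum>\<^sub># M = w"
    and size_coins: "size M = opt [1, a, b, c, d] w"
begin

abbreviation D :: "nat list" where "D \<equiv> [1, a, b, c, d]"

lemma coin_order: "1 < a" "a < b" "b < c" "c < d" "d < e"
  using system by (simp_all add: is_system_def)

lemma two_le_s: "2 \<le> s"
  using coin_order d_eq by linarith

lemma system_prefix: "is_system D"
  using is_system_butlast[of D e] system by simp

lemma e_le_w: "e \<le> w"
  using counterexample_ge_appended_coin[of D e w] system canonical least
  by (simp add: least_counterexample_def)

lemma opt_remove_used_coin: "u \<in># M \<Longrightarrow> opt D (w - u) < opt D w"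
  using opt_remove_coin_less[OF system_prefix, of M u] coins size_coins sum_coins by simp

lemma used_coin_le: "u \<in># M \<Longrightarrow> u \<le> w"
  using multi_member_split sum_coins by fastforce

lemma top_coin_unused: "d \<notin># M"
proof
  assume "d \<in># M"
  then show False
    using opt_remove_used_coin least_counterexample_opt_le_diff_top[of "[1, a, b, c]" d w]
      system_prefix least e_le_w coin_order by fastforce
qed

lemma used_coin_bound: "u \<in># M \<Longrightarrow> w < d + u"
  using least_counterexample_coin_bound[of "[1, a, b, c]" d w u] system_prefix least e_le_w
    coin_order coins opt_remove_used_coin used_coin_le by fastforce

lemma used_coin_below_top: "u \<in># M \<Longrightarrow> u = 1 \<or> u = a \<or> u = b \<or> u = c"
  using coins top_coin_unused by blast

lemma grd_prefix_small: "v < b \<Longrightarrow> grd D v = v div a + v mod a"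
  using grd_append_greater[of "[b, c, d]" v "[1, a]"] grd_two_coins coin_order by simp

lemma grd_prefix_below_a: "v < a \<Longrightarrow> grd D v = v"
  using grd_prefix_small coin_order by simp

lemma used_coin_shift: "u \<in># M \<Longrightarrow> u = s + 1 \<or> u = s + a"
proof -
  assume "u \<in># M"
  then have "u \<le> c" "s < u"
    using used_coin_below_top used_coin_bound e_le_w e_eq coin_order by fastforce+
  then have "grd D (u + d - e) \<le> 1"
    using canonical_append_two_coins[of D e u d] system canonical used_coin_below_top[OF \<open>u \<in># M\<close>]
      e_eq coin_order by auto
  moreover have "u + d - e = u - s" "u - s < b" using \<open>u \<le> c\<close> e_eq d_eq coin_order by auto
  ultimately have "(u - s) div a + (u - s) mod a \<le> 1" using grd_prefix_small by simp
  moreover have "u - s = a * ((u - s) div a) + (u - s) mod a" by simp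
  ultimately have "u - s = 1 \<or> u - s = a"
    using \<open>s < u\<close> by (cases "(u - s) div a") auto
  then show ?thesis using \<open>s < u\<close> by auto
qed

lemma used_coin_gt_s: "u \<in># M \<Longrightarrow> s < u"
  using used_coin_shift coin_order by fastforce

lemma used_coin_cases: "u \<in># M \<Longrightarrow> u = a \<or> u = b \<or> u = c"
  using used_coin_below_top used_coin_shift two_le_s coin_order by fastforce

lemma size_less_grd: "size M < Suc (grd D (w - d))"
  using least size_coins grd_append_top[of d w "[1, a, b, c]"] e_le_w coin_order
  by (simp add: least_counterexample_def counterexample_def)

lemma grd_extension_le_size: "w < 2 * e \<Longrightarrow> Suc (grd D (w - e)) \<le> size M"
proof -
  assume "w < 2 * e"
  have "Suc (grd D (w - e)) = grd (D @ [e]) w" using grd_append_once[of e w D] e_le_w \<open>w < 2 * e\<close> by simp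
  also have "\<dots> \<le> opt (D @ [e]) w"
    using canonical least unfolding canonical_def least_counterexample_def counterexample_def
    by (simp add: not_less)
  also have "\<dots> \<le> size M" using opt_append_le[of D e w] system size_coins by simp
  finally show ?thesis .
qed

lemma w_ne_d_plus_a: "size M = 2 \<Longrightarrow> w \<noteq> d + a"
  using size_less_grd grd_prefix_small[of a] coin_order by auto

lemma two_le_size: "2 \<le> size M"
proof (rule ccontr)
  assume "\<not> 2 \<le> size M"
  then consider "size M = 0" | "size M = 1" by linarith
  then consider "M = {#}" | u where "M = {#u#}" using size_1_singleton_mset by auto
  then show False
  proof cases
    case 1
    then show False using sum_coins e_le_w coin_order by simp
  next
    case 2
    then show False using sum_coins e_le_w coin_order used_coin_cases[of u] by auto
  qed
qed

lemma used_coins_eq_a: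
  assumes "3 \<le> size M" "u \<in># M"
  shows "u = a"
proof (rule ccontr)
  assume "u \<noteq> a"
  then have "b \<le> u" using used_coin_cases[OF assms(2)] coin_order by auto
  obtain M0 where M0: "M = add_mset u M0" using multi_member_split[OF assms(2)] by blast
  then obtain v M1 where M1: "M0 = add_mset v M1"
    using assms(1) size_eq_Suc_imp_eq_union[of M0 "size M0 - 1"] by fastforce
  then obtain t R where R: "M1 = add_mset t R"
    using assms(1) M0 size_eq_Suc_imp_eq_union[of M1 "size M1 - 1"] by fastforce
  have "w = u + v + t + \<Sum>\<^sub># R" using sum_coins M0 M1 R by simp
  moreover have "w < d + v" using used_coin_bound M0 M1 by simp
  moreover have "s < t" using used_coin_gt_s M0 M1 R by simp
  ultimately show False using \<open>b \<le> u\<close> d_eq by linarith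
qed

text \<open>Three or more coins force M = {a, ..., a} and w = e; greedy then fails on b + d.\<close>
lemma size_le_two: "size M \<le> 2"
proof (rule ccontr)
  assume "\<not> size M \<le> 2"
  define k where "k = size M - 3"
  have k: "size M = k + 3" using \<open>\<not> size M \<le> 2\<close> unfolding k_def by linarith
  have "set_mset M \<subseteq> {a}" using used_coins_eq_a k by auto
  then have M: "M = replicate_mset (k + 3) a" using set_mset_subset_singletonD k by metis
  then have w: "w = (k + 3) * a" and "a \<in># M" using sum_coins by auto
  have a_eq: "a = s + 1" using used_coin_shift[OF \<open>a \<in># M\<close>] two_le_s by auto
  have "w = e" using used_coin_bound[OF \<open>a \<in># M\<close>] e_le_w e_eq a_eq by linarith
  have "grd D (w - d) = s" using \<open>w = e\<close> e_eq grd_prefix_below_a[of s] a_eq by simp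
  then have "k + 3 < a" using size_less_grd k a_eq by simp
  have "(k + 3) * a = k * a + 3 * a" by (simp add: algebra_simps)
  then have b_eq: "b = k * a + s + 3" using w \<open>w = e\<close> e_eq d_eq a_eq by linarith
  have "e \<le> b + d" "b + d < 2 * e" using b_eq d_eq e_eq coin_order by linarith+
  then have "grd D (b + d - e) \<le> 1" using canonical_append_two_coins[of D e b d] system canonical by simp
  moreover have "b + d - e = 3 + k * a" using b_eq d_eq e_eq by linarith
  moreover have "grd D (3 + k * a) = k + 3"
    using grd_prefix_small[of "3 + k * a"] b_eq \<open>k + 3 < a\<close> two_le_s by simp
  ultimately show False by simp
qed

lemma coin_shape_pair:
  assumes M: "M = {#u, v#}" and "u \<le> v"
  shows "(b = 2 * a - 1 \<and> d = a + c - 1 \<and> e = 2 * c - 1) \<or> (b = 2 * a \<and> d = a + c \<and> e = 2 * c)"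
proof -
  have u: "u \<in># M" and v: "v \<in># M" and w: "w = u + v" and "size M = 2"
    using M sum_coins by auto
  have "e \<le> u + v" using e_le_w w by simp
  have "s + 1 < s + a" using coin_order by simp
  then consider (low) "u = s + 1" "v = s + 1" | (mixed) "u = s + 1" "v = s + a"
    | (high) "u = s + a" "v = s + a"
    using used_coin_shift[OF u] used_coin_shift[OF v] \<open>u \<le> v\<close> by fastforce
  then show ?thesis
  proof cases
    case low
    then show ?thesis using \<open>e \<le> u + v\<close> e_eq d_eq coin_order by linarith
  next
    case mixed
    have "b = a + 1" using \<open>e \<le> u + v\<close> mixed e_eq d_eq coin_order by linarith
    consider "u = a" | "u = b" | "u = c" using used_coin_cases[OF u] by blast
    then show ?thesis
    proof cases
      case 1
      then have "v = c" using used_coin_cases[OF v] mixed \<open>b = a + 1\<close> two_le_s by auto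
      have "e \<le> c + c" "c + c < 2 * e" "c + c - e = a - 1"
        using \<open>v = c\<close> 1 mixed \<open>b = a + 1\<close> d_eq e_eq coin_order by linarith+
      then have "grd D (a - 1) \<le> 1"
        using canonical_append_two_coins[of D e c c] system canonical by simp
      then show ?thesis using grd_prefix_below_a[of "a - 1"] 1 mixed two_le_s by simp
    next
      case 2
      then show ?thesis using w_ne_d_plus_a \<open>size M = 2\<close> w mixed d_eq by simp
    next
      case 3
      then show ?thesis using used_coin_cases[OF v] mixed coin_order by auto
    qed
  next
    case high
    consider "u = a" | "u = b" | "u = c" using used_coin_cases[OF u] by blast
    then show ?thesis
    proof cases
      case 1
      then show ?thesis using high two_le_s by simp
    next
      case 2
      then show ?thesis using w_ne_d_plus_a \<open>size M = 2\<close> w high d_eq by simp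
    next
      case 3
      have "b \<le> 2 * a" "w - e = 2 * a - b" "w < 2 * e"
        using \<open>e \<le> u + v\<close> w high 3 e_eq d_eq coin_order by linarith+
      then have "Suc (2 * a - b) \<le> 2"
        using grd_extension_le_size grd_prefix_below_a[of "2 * a - b"] \<open>size M = 2\<close> coin_order
        by simp
      then show ?thesis using \<open>b \<le> 2 * a\<close> 3 high d_eq e_eq by auto
    qed
  qed
qed

lemma coin_shape:
  "(b = 2 * a - 1 \<and> d = a + c - 1 \<and> e = 2 * c - 1) \<or> (b = 2 * a \<and> d = a + c \<and> e = 2 * c)"
proof -
  have "size M = 2" using two_le_size size_le_two by simp
  then obtain u N where N: "M = add_mset u N" "size N = 1"
    using size_eq_Suc_imp_eq_union[of M 1] by auto
  then obtain v where "M = {#u, v#}" using size_1_singleton_mset[of N] by auto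
  then show ?thesis
    using coin_shape_pair[of u v] coin_shape_pair[of v u] add_mset_commute by (cases "u \<le> v") auto
qed

end

theorem lemma8:
  fixes c2 c3 c4 c5 :: nat
  assumes "is_system [1, c2, c3, c4, c5, 2 * c5 - c3]"
    and "canonical [1, c2, c3, c4, c5, 2 * c5 - c3]"
    and "\<not> canonical [1, c2, c3, c4, c5]"
  shows "[1, c2, c3, c4, c5, 2 * c5 - c3] = [1, c2, 2 * c2 - 1, c4, c2 + c4 - 1, 2 * c4 - 1]
       \<or> [1, c2, c3, c4, c5, 2 * c5 - c3] = [1, c2, 2 * c2, c4, c2 + c4, 2 * c4]"
proof -
  let ?D = "[1, c2, c3, c4, c5]"
  have "c3 < c5" using assms(1) by (simp add: is_system_def)
  have "is_system ?D" using is_system_butlast[of ?D "2 * c5 - c3"] assms(1) by simp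
  obtain w where least: "least_counterexample ?D w"
    using exists_least_counterexample assms(3) by blast
  obtain M where "set_mset M \<subseteq> set ?D" "\<Sum>\<^sub># M = w" "size M = opt ?D w"
    using opt_attained_mset[OF \<open>is_system ?D\<close>] by blast
  then interpret prefix_counterexample c2 c3 c4 c5 "2 * c5 - c3" "c5 - c3" w M
    using assms(1,2) least \<open>c3 < c5\<close> by unfold_locales auto
  show ?thesis using coin_shape by auto
qed

end
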